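(* Let $D$ be a nonempty closed subset of $\mathbb R$ with $D\subseteq(0,1)$. Let $c:[0,1]\to[0,\infty]$ be grounded and lower semicontinuous with $c(1)=\infty$, and let $\succsim$ be the binary relation on $l_\infty$ represented by $I(x)=\min_{\delta\in[0,1)}\{(1-\delta)\sum_{t\ge0}\delta^tx_t+c(\delta)\}$ (i.e. $x\succsim y\iff I(x)\ge I(y)$). Then the following are equivalent: (i) $\succsim$ satisfies Unanimity: for all $x,y\in l_\infty$, if $(1-\delta)\sum_t\delta^tx_t\ge(1-\delta)\sum_t\delta^ty_t$ for all $\delta\in D$, then $x\succsim y$; (ii) $c(\delta)=\infty$ for every $\delta\in[0,1]\setminus D$. Consequently, under (i), $I(x)=\min_{\delta\in D}\{(1-\delta)\sum_{t\ge0}\delta^tx_t+c(\delta)\}$.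
   Context: $l_\infty$: real bounded sequences $x=(x_0,x_1,\dots)$. A function is grounded if its infimum is $0$. Convention $0^0=1$. *)

theory Defs
  imports "HOL-Analysis.Analysis"
begin

text \<open>Discounted utility (1 - d) * sum_t d^t x_t  (with 0^0 = 1, as in Isabelle).\<close>
definition disc_util :: "real \<Rightarrow> (nat \<Rightarrow> real) \<Rightarrow> real" where
  "disc_util d x = (1 - d) * (\<Sum>t. d ^ t * x t)"

definition obj_val :: "(real \<Rightarrow> ereal) \<Rightarrow> (nat \<Rightarrow> real) \<Rightarrow> real \<Rightarrow> ereal" where
  "obj_val c x d = ereal (disc_util d x) + c d"

text \<open>The representing functional I(x) = min over d in [0,1) (written as infimum).\<close>
definition I_fun :: "(real \<Rightarrow> ereal) \<Rightarrow> (nat \<Rightarrow> real) \<Rightarrow> ereal" where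
  "I_fun c x = (INF d\<in>{0..<1}. obj_val c x d)"

definition pref :: "(real \<Rightarrow> ereal) \<Rightarrow> (nat \<Rightarrow> real) \<Rightarrow> (nat \<Rightarrow> real) \<Rightarrow> bool" where
  "pref c x y \<longleftrightarrow> I_fun c x \<ge> I_fun c y"

definition grounded_on :: "real set \<Rightarrow> (real \<Rightarrow> ereal) \<Rightarrow> bool" where
  "grounded_on S c \<longleftrightarrow> (INF d\<in>S. c d) = 0"

definition lsc_on :: "real set \<Rightarrow> (real \<Rightarrow> ereal) \<Rightarrow> bool" where
  "lsc_on S c \<longleftrightarrow> (\<forall>a::ereal. closedin (top_of_set S) {d\<in>S. c d \<le> a})"

definition unanimity :: "real set \<Rightarrow> ((nat \<Rightarrow> real) \<Rightarrow> (nat \<Rightarrow> real) \<Rightarrow> bool) \<Rightarrow> bool" where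
  "unanimity D R \<longleftrightarrow> (\<forall>x y. Bseq x \<longrightarrow> Bseq y \<longrightarrow>
      (\<forall>d\<in>D. disc_util d x \<ge> disc_util d y) \<longrightarrow> R x y)"

end

theory Submission
  imports Defs
begin

text \<open>
  If \<open>c\<close> is finite at some \<open>d\<^sub>0 \<notin> D\<close>, choose a ball of radius \<open>e\<close> around \<open>d\<^sub>0\<close> missing \<open>D\<close> and
  the stream \<open>z = M (d\<^sub>0\<^sup>2 - e\<^sup>2, -2 d\<^sub>0, 1, 0, 0, \<dots>)\<close>, whose discounted value at \<open>d\<close> is
  \<open>(1 - d) M ((d - d\<^sub>0)\<^sup>2 - e\<^sup>2)\<close>: it is nonnegative on \<open>D\<close> but, for large \<open>M\<close>, so negative at
  \<open>d\<^sub>0\<close> that \<open>I(z) < 0 \<le> I(0)\<close>, contradicting unanimity between \<open>z\<close> and \<open>0\<close>. Conversely, if \<open>c\<close>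
  is infinite off \<open>D\<close>, the minimum defining \<open>I\<close> only runs over \<open>D\<close>, where pointwise dominance
  passes to the minimum. The minimum over \<open>D\<close> is attained because the objective is the sum of a
  continuous and a lower semicontinuous function on the compact set \<open>D\<close>.
\<close>

lemma ereal_add_le_iff_le_diff: "ereal a + b \<le> ereal r \<longleftrightarrow> b \<le> ereal (r - a)"
  by (cases b) auto

lemma closed_sublevel_add_continuous:
  fixes g :: "'a::first_countable_topology \<Rightarrow> real" and c :: "'a \<Rightarrow> ereal"
  assumes "closed K" "continuous_on K g" and sublevel: "\<And>a. closed {d\<in>K. c d \<le> a}"
  shows "closed {d\<in>K. ereal (g d) + c d \<le> a}"
proof (cases a)
  case (real r)
  show ?thesis unfolding closed_sequential_limits
  proof (intro allI impI, elim conjE)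
    fix s l assume s: "\<forall>n. s n \<in> {d\<in>K. ereal (g d) + c d \<le> a}" and "s \<longlonglongrightarrow> l"
    then have "l \<in> K" using \<open>closed K\<close> by (auto intro: closed_sequentially)
    have g_lim: "(\<lambda>n. g (s n)) \<longlonglongrightarrow> g l"
      using continuous_on_tendsto_compose[OF \<open>continuous_on K g\<close> \<open>s \<longlonglongrightarrow> l\<close> \<open>l \<in> K\<close>] s by auto
    have "c l \<le> ereal (r - g l) + ereal e" if "e > 0" for e
    proof -
      have "eventually (\<lambda>n. g l - e < g (s n)) sequentially"
        using order_tendstoD(1)[OF g_lim] \<open>e > 0\<close> by simp
      then have "eventually (\<lambda>n. s n \<in> {d\<in>K. c d \<le> ereal (r - g l + e)}) sequentially"
      proof eventually_elim
        case (elim n)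
        then show ?case using s real by (auto simp: ereal_add_le_iff_le_diff intro: order.trans)
      qed
      then have "l \<in> {d\<in>K. c d \<le> ereal (r - g l + e)}"
        using \<open>s \<longlonglongrightarrow> l\<close> sublevel by (intro Lim_in_closed_set) auto
      then show ?thesis by simp
    qed
    then have "c l \<le> ereal (r - g l)" by (rule ereal_le_epsilon2)
    then show "l \<in> {d\<in>K. ereal (g d) + c d \<le> a}"
      using \<open>l \<in> K\<close> real by (simp add: ereal_add_le_iff_le_diff)
  qed
next
  case PInf
  then show ?thesis using \<open>closed K\<close> by simp
next
  case MInf
  then have "{d\<in>K. ereal (g d) + c d \<le> a} = {d\<in>K. c d \<le> -\<infinity>}" by auto
  then show ?thesis using sublevel by metis
qed

lemma compact_closed_sublevel_attains_INF:
  fixes f :: "'a::topological_space \<Rightarrow> 'b::{complete_linorder, dense_linorder}"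
  assumes "compact K" "K \<noteq> {}" and sublevel: "\<And>a. closed {d\<in>K. f d \<le> a}"
  obtains d where "d \<in> K" "\<And>d'. d' \<in> K \<Longrightarrow> f d \<le> f d'"
proof -
  let ?m = "INF d\<in>K. f d"
  have "K \<inter> (\<Inter>a\<in>{a. ?m < a}. {d\<in>K. f d \<le> a}) \<noteq> {}"
  proof (rule compact_imp_fip_image[OF \<open>compact K\<close> sublevel])
    fix A assume "finite A" "A \<subseteq> {a. ?m < a}"
    show "K \<inter> (\<Inter>a\<in>A. {d\<in>K. f d \<le> a}) \<noteq> {}"
    proof (cases "A = {}")
      case False
      with \<open>finite A\<close> \<open>A \<subseteq> _\<close> have "?m < Min A" by auto
      then obtain d where "d \<in> K" "f d < Min A" by (auto simp: INF_less_iff)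
      with \<open>finite A\<close> have "d \<in> K \<inter> (\<Inter>a\<in>A. {d\<in>K. f d \<le> a})"
        by (auto intro: less_imp_le order.strict_trans2[OF _ Min_le])
      then show ?thesis by blast
    qed (use \<open>K \<noteq> {}\<close> in auto)
  qed
  then obtain d where d: "d \<in> K" "\<And>a. ?m < a \<Longrightarrow> f d \<le> a" by blast
  have "f d \<le> ?m" by (rule dense_ge) (rule d(2))
  then show thesis using that d(1) by (meson INF_lower order.trans)
qed

lemma isCont_disc_util:
  assumes "Bseq x" "\<bar>d\<bar> < 1"
  shows "isCont (\<lambda>d. disc_util d x) d"
proof -
  obtain B where B: "B > 0" "\<And>n. norm (x n) \<le> B" using assms(1) by (meson BseqE)
  define K where "K = (1 + \<bar>d\<bar>) / 2"
  have K: "0 \<le> K" "K < 1" "\<bar>d\<bar> < K" using assms(2) by (auto simp: K_def)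
  have "summable (\<lambda>n. B * K ^ n)" using K by (auto intro!: summable_mult summable_geometric)
  then have "summable (\<lambda>n. x n * K ^ n)"
    by (rule summable_comparison_test'[where N=0])
      (use B K in \<open>auto simp: abs_mult intro!: mult_right_mono\<close>)
  then have "isCont (\<lambda>d. \<Sum>n. x n * d ^ n) d" by (rule isCont_powser) (use K in auto)
  then have "isCont (\<lambda>d. (1 - d) * (\<Sum>n. x n * d ^ n)) d" by (intro continuous_intros)
  then show ?thesis unfolding disc_util_def by (simp add: mult.commute)
qed

lemma disc_util_finite_support:
  assumes "\<And>t. t \<ge> n \<Longrightarrow> x t = 0"
  shows "disc_util d x = (1 - d) * (\<Sum>t<n. d ^ t * x t)"
  unfolding disc_util_def using assms by (subst suminf_finite[of "{..<n}"]) auto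

lemma exists_disc_util_separating:
  fixes D :: "real set"
  assumes "closed D" "D \<subseteq> {..1}" "d0 < 1" "d0 \<notin> D" "K \<ge> 0"
  obtains z where "Bseq z" "\<And>d. d \<in> D \<Longrightarrow> 0 \<le> disc_util d z" "disc_util d0 z = - K"
proof -
  obtain e where e: "e > 0" "ball d0 e \<subseteq> - D"
    using assms(1,4) open_contains_ball by (metis ComplI open_Compl)
  define M where "M = K / ((1 - d0) * e\<^sup>2)"
  have "M \<ge> 0" using e assms(3,5) by (simp add: M_def)
  define z where "z t = (if t = 0 then M * (d0\<^sup>2 - e\<^sup>2) else if t = 1 then - 2 * M * d0
    else if t = 2 then M else 0)" for t :: nat
  have z_util: "disc_util d z = (1 - d) * M * ((d - d0)\<^sup>2 - e\<^sup>2)" for d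
    by (subst disc_util_finite_support[of 3])
      (auto simp: z_def numeral_3_eq_3 power2_eq_square algebra_simps)
  have "Bseq z"
    by (rule BseqI'[of _ "\<bar>z 0\<bar> + \<bar>z 1\<bar> + \<bar>z 2\<bar>"]) (auto simp: z_def)
  moreover have "0 \<le> disc_util d z" if "d \<in> D" for d
  proof -
    have "d \<notin> ball d0 e" using e(2) that by auto
    then have "e \<le> \<bar>d - d0\<bar>" by (simp add: dist_real_def abs_minus_commute)
    then have "e\<^sup>2 \<le> (d - d0)\<^sup>2" using e(1) by (metis abs_le_square_iff abs_of_pos)
    then show ?thesis using that assms(2) \<open>M \<ge> 0\<close> by (auto simp: z_util)
  qed
  moreover have "disc_util d0 z = - K"
    using e(1) assms(3) by (simp add: z_util M_def)
  ultimately show thesis by (rule that)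
qed

lemma unanimity_if_cost_infinite_outside:
  assumes "\<forall>d\<in>{0..1} - D. c d = \<infinity>"
  shows "unanimity D (pref c)"
  unfolding unanimity_def pref_def
proof (intro allI impI)
  fix x y :: "nat \<Rightarrow> real"
  assume dominates: "\<forall>d\<in>D. disc_util d y \<le> disc_util d x"
  show "I_fun c y \<le> I_fun c x"
    unfolding I_fun_def
  proof (rule INF_greatest)
    fix d assume d: "d \<in> {0..<1::real}"
    show "(INF d\<in>{0..<1}. obj_val c y d) \<le> obj_val c x d"
    proof (cases "d \<in> D")
      case True
      have "(INF d\<in>{0..<1}. obj_val c y d) \<le> obj_val c y d" using d by (rule INF_lower)
      also have "\<dots> \<le> obj_val c x d"
        unfolding obj_val_def using dominates True by (intro add_right_mono) auto
      finally show ?thesis .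
    next
      case False
      then show ?thesis using assms d by (simp add: obj_val_def)
    qed
  qed
qed

lemma cost_infinite_outside_if_unanimity:
  assumes "unanimity D (pref c)" "closed D" "D \<subseteq> {0<..<1}"
    and "\<forall>d\<in>{0..1}. c d \<ge> 0" "c 1 = \<infinity>"
  shows "\<forall>d\<in>{0..1} - D. c d = \<infinity>"
proof (rule ccontr)
  assume "\<not> ?thesis"
  then obtain d0 where d0: "d0 \<in> {0..1}" "d0 \<notin> D" "c d0 \<noteq> \<infinity>" by auto
  with assms(5) have "d0 < 1" by (cases "d0 = 1") auto
  have "c d0 \<ge> 0" using d0(1) assms(4) by blast
  with d0(3) obtain K where K: "c d0 = ereal K" "K \<ge> 0" by (cases "c d0") auto
  obtain z where z: "Bseq z" "\<And>d. d \<in> D \<Longrightarrow> 0 \<le> disc_util d z" "disc_util d0 z = - (K + 1)"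
    by (rule exists_disc_util_separating[of D d0 "K + 1"])
      (use assms(2,3) d0(2) \<open>d0 < 1\<close> K(2) in auto)
  have "\<forall>d\<in>D. disc_util d (\<lambda>t. 0) \<le> disc_util d z" using z(2) by (simp add: disc_util_def)
  then have unanimous: "I_fun c (\<lambda>t. 0) \<le> I_fun c z"
    using assms(1) z(1) unfolding unanimity_def pref_def by auto
  have "0 \<le> I_fun c (\<lambda>t. 0)"
    unfolding I_fun_def obj_val_def disc_util_def using assms(4) by (auto intro!: INF_greatest)
  also note unanimous
  also have "I_fun c z \<le> obj_val c z d0"
    unfolding I_fun_def using d0(1) \<open>d0 < 1\<close> by (intro INF_lower) auto
  also have "\<dots> = ereal (- 1)" by (simp add: obj_val_def z(3) K)
  finally show False by simp
qed

lemma I_fun_eq_INF_restrict: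
  assumes "D \<subseteq> {0..<1}" "\<forall>d\<in>{0..<1} - D. c d = \<infinity>"
  shows "I_fun c x = (INF d\<in>D. obj_val c x d)"
proof -
  have "{0..<1} = D \<union> ({0..<1} - D)" using assms(1) by blast
  then have "I_fun c x = inf (INF d\<in>D. obj_val c x d) (INF d\<in>{0..<1} - D. obj_val c x d)"
    unfolding I_fun_def by (metis INF_union)
  moreover have "(INF d\<in>{0..<1} - D. obj_val c x d) = \<infinity>"
    using assms(2)
    by (simp add: obj_val_def INF_top_conv(1)[where 'a=ereal, unfolded top_ereal_def])
  ultimately show ?thesis by simp
qed

lemma obj_val_attains_min:
  assumes "compact D" "D \<noteq> {}" "D \<subseteq> {0<..<1}" "lsc_on {0..1} c" "Bseq x"
  obtains d where "d \<in> D" "\<And>d'. d' \<in> D \<Longrightarrow> obj_val c x d \<le> obj_val c x d'"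
proof (rule compact_closed_sublevel_attains_INF[OF assms(1,2)])
  fix a
  have "closed {d\<in>D. c d \<le> b}" for b
  proof -
    have "closed {d\<in>{0..1}. c d \<le> b}"
      using assms(4) unfolding lsc_on_def by (simp add: closedin_closed_eq)
    moreover have "{d\<in>D. c d \<le> b} = D \<inter> {d\<in>{0..1}. c d \<le> b}"
      using assms(3) by auto
    ultimately show ?thesis using compact_imp_closed[OF assms(1)] by (metis closed_Int)
  qed
  moreover have "continuous_on D (\<lambda>d. disc_util d x)"
    using assms(3) by (intro continuous_at_imp_continuous_on ballI isCont_disc_util[OF assms(5)]) auto
  ultimately show "closed {d\<in>D. obj_val c x d \<le> a}"
    unfolding obj_val_def using compact_imp_closed[OF assms(1)] closed_sublevel_add_continuous
    by blast
qed (rule that)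

theorem proposition4:
  fixes D :: "real set" and c :: "real \<Rightarrow> ereal"
  assumes "D \<noteq> {}" and "closed D" and "D \<subseteq> {0<..<1}"
    and "\<forall>d\<in>{0..1}. c d \<ge> 0"
    and "grounded_on {0..1} c"
    and "lsc_on {0..1} c"
    and "c 1 = \<infinity>"
  shows "(unanimity D (pref c) \<longleftrightarrow> (\<forall>d\<in>{0..1} - D. c d = \<infinity>))
    \<and> (unanimity D (pref c) \<longrightarrow>
         (\<forall>x. Bseq x \<longrightarrow>
            (\<exists>d\<in>D. I_fun c x = obj_val c x d \<and> (\<forall>d'\<in>D. obj_val c x d \<le> obj_val c x d'))))"
proof -
  have "compact D"
  proof -
    have "D = D \<inter> {0..1}" using assms(3) by auto
    then show ?thesis using closed_Int_compact[OF assms(2) compact_Icc] by metis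
  qed
  have "unanimity D (pref c) \<longleftrightarrow> (\<forall>d\<in>{0..1} - D. c d = \<infinity>)"
    using unanimity_if_cost_infinite_outside cost_infinite_outside_if_unanimity assms(2,3,4,7)
    by blast
  moreover have "\<exists>d\<in>D. I_fun c x = obj_val c x d \<and> (\<forall>d'\<in>D. obj_val c x d \<le> obj_val c x d')"
    if infinite_outside: "\<forall>d\<in>{0..1} - D. c d = \<infinity>" and "Bseq x" for x
  proof -
    obtain d where d: "d \<in> D" "\<And>d'. d' \<in> D \<Longrightarrow> obj_val c x d \<le> obj_val c x d'"
      using obj_val_attains_min[OF \<open>compact D\<close> assms(1,3,6) \<open>Bseq x\<close>] by blast
    have "I_fun c x = (INF d\<in>D. obj_val c x d)"
      using infinite_outside assms(3) by (intro I_fun_eq_INF_restrict) auto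
    also have "\<dots> = obj_val c x d"
      using d by (intro antisym INF_lower INF_greatest) auto
    finally show ?thesis using d by blast
  qed
  ultimately show ?thesis by blast
qed

end
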